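(* Let $p=\frac12-\varepsilon$ with $0<\varepsilon\le\frac12$, and run Algorithm LB-Search (described in the context) with $r=\frac12-\eta$, where $\eta=\varepsilon/2$. If the reply to each query was erroneous with probability at most $p$, independently, then the algorithm outputs the target vertex with probability at least $1-n^{-3}$.
   Context: Setting: $G=(V,E)$ is a finite simple connected graph with $n$ vertices and an unknown target vertex $v^{*}$. A query on vertex $q$ returns a reply $v$; a correct reply is $v=q$ if $q=v^{*}$, and otherwise a neighbor of $q$ on a shortest path from $q$ to $v^{*}$. A vertex $u$ is consistent (compatible) with reply $v$ to query $q$ if $q=v=u$, or $q\ne v$ and $v$ lies on a shortest path between $u$ and $q$; $N(q,v)$ denotes the set of such $u$. For weights $\omega\colon V\to(0,\infty)$ and $X\subseteq V$ let $\omega(X)=\sum_{u\in X}\omega(u)$, $\Lambda(v)=\max_{u\in N(v)}\omega(N(v,u))$ where $N(v)$ is the neighbor set, and call $q$ $\delta$-close to a median if $\Lambda(q)\le(\frac12+\delta)\omega(V)$. Parameters: it is assumed that $\eta<\frac18$; $r=\frac12-\eta$, $\delta=\eta/4$, $\Gamma=\frac{1}{1-4\eta}$, $\tau=\frac{10\log_2 n}{\eta^2}$. Algorithm LB-Search: set $\omega(v)=1/n$ and a counter $\ell_v=0$ for every $v$. Repeat for $\tau$ steps: let $q$ be any vertex $\delta$-close to a median with respect to current weights; query $q$; for each vertex $u$ not compatible with the reply, set $\omega(u)\gets\omega(u)/\Gamma$ and $\ell_u\gets\ell_u+1$. Finally return a vertex $v$ with the smallest $\ell_v$. *)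

theory Defs
  imports "HOL-Probability.Probability"
begin

definition simple_graph :: "'a set \<Rightarrow> ('a \<Rightarrow> 'a \<Rightarrow> bool) \<Rightarrow> bool" where
  "simple_graph V E \<longleftrightarrow> finite V \<and> V \<noteq> {} \<and>
     (\<forall>x y. E x y \<longrightarrow> x \<in> V \<and> y \<in> V) \<and>
     (\<forall>x y. E x y \<longrightarrow> E y x) \<and> (\<forall>x. \<not> E x x)"

definition walk_of_len :: "('a \<Rightarrow> 'a \<Rightarrow> bool) \<Rightarrow> nat \<Rightarrow> 'a \<Rightarrow> 'a \<Rightarrow> bool" where
  "walk_of_len E k u v \<longleftrightarrow> (\<exists>xs. xs \<noteq> [] \<and> hd xs = u \<and> last xs = v \<and>
      length xs = Suc k \<and> successively E xs)"

definition connected_graph :: "'a set \<Rightarrow> ('a \<Rightarrow> 'a \<Rightarrow> bool) \<Rightarrow> bool" where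
  "connected_graph V E \<longleftrightarrow> simple_graph V E \<and> (\<forall>u\<in>V. \<forall>v\<in>V. \<exists>k. walk_of_len E k u v)"

definition gdist :: "('a \<Rightarrow> 'a \<Rightarrow> bool) \<Rightarrow> 'a \<Rightarrow> 'a \<Rightarrow> nat" where
  "gdist E u v = (LEAST k. walk_of_len E k u v)"

definition correct_reply :: "('a \<Rightarrow> 'a \<Rightarrow> bool) \<Rightarrow> 'a \<Rightarrow> 'a \<Rightarrow> 'a \<Rightarrow> bool" where
  "correct_reply E t q v \<longleftrightarrow>
     (q = t \<and> v = q) \<or>
     (q \<noteq> t \<and> E q v \<and> Suc (gdist E v t) = gdist E q t)"

definition compatible :: "('a \<Rightarrow> 'a \<Rightarrow> bool) \<Rightarrow> 'a \<Rightarrow> 'a \<Rightarrow> 'a \<Rightarrow> bool" where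
  "compatible E u q v \<longleftrightarrow>
     (q = v \<and> v = u) \<or> (q \<noteq> v \<and> gdist E q v + gdist E v u = gdist E q u)"

definition Ncomp :: "'a set \<Rightarrow> ('a \<Rightarrow> 'a \<Rightarrow> bool) \<Rightarrow> 'a \<Rightarrow> 'a \<Rightarrow> 'a set" where
  "Ncomp V E q v = {u \<in> V. compatible E u q v}"

definition wsum :: "('a \<Rightarrow> real) \<Rightarrow> 'a set \<Rightarrow> real" where
  "wsum \<omega> X = (\<Sum>u\<in>X. \<omega> u)"

definition delta_close :: "'a set \<Rightarrow> ('a \<Rightarrow> 'a \<Rightarrow> bool) \<Rightarrow> ('a \<Rightarrow> real) \<Rightarrow> real \<Rightarrow> 'a \<Rightarrow> bool" where
  "delta_close V E \<omega> \<delta> q \<longleftrightarrow> q \<in> V \<and>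
     (\<forall>u. E q u \<longrightarrow> wsum \<omega> (Ncomp V E q u) \<le> (1/2 + \<delta>) * wsum \<omega> V)"

text \<open>A history is the list of (query, reply) pairs so far. Counter l_u and weight omega(u).\<close>
definition cnt :: "('a \<Rightarrow> 'a \<Rightarrow> bool) \<Rightarrow> ('a \<times> 'a) list \<Rightarrow> 'a \<Rightarrow> nat" where
  "cnt E h u = length (filter (\<lambda>(q, v). \<not> compatible E u q v) h)"

definition weight :: "'a set \<Rightarrow> ('a \<Rightarrow> 'a \<Rightarrow> bool) \<Rightarrow> real \<Rightarrow> ('a \<times> 'a) list \<Rightarrow> 'a \<Rightarrow> real" where
  "weight V E \<Gamma> h u = (1 / real (card V)) / \<Gamma> ^ cnt E h u"

text \<open>Execution: Q = the algorithm's query choice (from the history),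
  cor / err = adversary's choice of correct / erroneous reply (may depend on the
  past error pattern and the query), c t = True iff the reply at step t is erroneous.\<close>
fun run :: "(('a \<times> 'a) list \<Rightarrow> 'a) \<Rightarrow> (bool list \<Rightarrow> 'a \<Rightarrow> 'a) \<Rightarrow> (bool list \<Rightarrow> 'a \<Rightarrow> 'a)
            \<Rightarrow> (nat \<Rightarrow> bool) \<Rightarrow> nat \<Rightarrow> ('a \<times> 'a) list" where
  "run Q cor err c 0 = []"
| "run Q cor err c (Suc t) =
     (let h = run Q cor err c t; q = Q h; bs = map c [0..<t]
      in h @ [(q, if c t then err bs q else cor bs q)])"

end

theory Submission
  imports Defs
begin

(* Track the potential Phi = omega(V - {vstar}) / omega(vstar). If the query q is delta-close to a
   median, every reply v <> q is compatible with at most a 1/2 + delta fraction of the weight: for a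
   non-neighbour v, N(q,v) is contained in N(q,w) for the neighbour w of q on a shortest path to v.
   Hence a correct reply penalizes at least a quarter of the weight outside vstar, while an
   erroneous one raises Phi only by a controlled amount. With eta = epsilon/2 the error probability
   is at most 1/2 - 2 eta and the penalty factor is 1 - 4 eta, and together this makes the expected
   potential shrink by the factor 1 - 2 eta^2 per query. By Markov's inequality, after tau queries
   Phi < 1 fails with probability at most (n - 1)(1 - 2 eta^2)^tau <= n^-3; and Phi < 1 means that
   vstar outweighs every other vertex, i.e. has strictly fewer penalties than any of them. *)

section \<open>Walks and graph distance\<close>

lemma walk_of_len_0_iff [simp]: "walk_of_len E 0 u v \<longleftrightarrow> u = v"
proof
  assume "walk_of_len E 0 u v"
  then obtain xs where "hd xs = u" "last xs = v" "length xs = 1"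
    unfolding walk_of_len_def by auto
  then show "u = v" by (cases xs) auto
qed (auto simp: walk_of_len_def intro!: exI[of _ "[u]"])

lemma walk_of_len_Suc_iff:
  "walk_of_len E (Suc k) u v \<longleftrightarrow> (\<exists>w. E u w \<and> walk_of_len E k w v)"
proof
  assume "walk_of_len E (Suc k) u v"
  then obtain xs where xs: "hd xs = u" "last xs = v" "length xs = Suc (Suc k)" "successively E xs"
    unfolding walk_of_len_def by blast
  then obtain w ys where "xs = u # w # ys"
    by (cases xs; cases "tl xs") auto
  with xs show "\<exists>w. E u w \<and> walk_of_len E k w v"
    unfolding walk_of_len_def by (intro exI[of _ w] conjI exI[of _ "w # ys"]) auto
next
  assume "\<exists>w. E u w \<and> walk_of_len E k w v"
  then obtain w xs where "E u w" "xs \<noteq> []" "hd xs = w" "last xs = v" "length xs = Suc k"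
      "successively E xs"
    unfolding walk_of_len_def by blast
  then show "walk_of_len E (Suc k) u v"
    unfolding walk_of_len_def by (intro exI[of _ "u # xs"]) (cases xs; auto)
qed

lemma walk_of_len_add:
  "walk_of_len E k x y \<Longrightarrow> walk_of_len E l y z \<Longrightarrow> walk_of_len E (k + l) x z"
  by (induction k arbitrary: x) (auto simp: walk_of_len_Suc_iff)

lemma gdist_le: "walk_of_len E k u v \<Longrightarrow> gdist E u v \<le> k"
  unfolding gdist_def by (rule Least_le)

lemma gdist_self [simp]: "gdist E u u = 0"
  using gdist_le[of E 0 u u] by simp

context
  fixes V and E :: "'a \<Rightarrow> 'a \<Rightarrow> bool"
  assumes G: "connected_graph V E"
begin

lemma connected_graph_finite: "finite V"
  and connected_graph_edge_in: "E u v \<Longrightarrow> u \<in> V \<and> v \<in> V"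
  and connected_graph_irrefl: "E u v \<Longrightarrow> u \<noteq> v"
  using G unfolding connected_graph_def simple_graph_def by blast+

lemma walk_of_len_gdist: "u \<in> V \<Longrightarrow> v \<in> V \<Longrightarrow> walk_of_len E (gdist E u v) u v"
  using G unfolding connected_graph_def gdist_def by (meson LeastI)

lemma gdist_triangle:
  assumes "x \<in> V" "y \<in> V" "z \<in> V"
  shows "gdist E x z \<le> gdist E x y + gdist E y z"
  using assms by (intro gdist_le walk_of_len_add[OF walk_of_len_gdist walk_of_len_gdist])

lemma gdist_eq_0_iff: "u \<in> V \<Longrightarrow> v \<in> V \<Longrightarrow> gdist E u v = 0 \<longleftrightarrow> u = v"
  using walk_of_len_gdist[of u v] by auto

lemma gdist_edge: "E u v \<Longrightarrow> gdist E u v = 1"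
proof -
  assume e: "E u v"
  then have "gdist E u v \<le> 1"
    by (intro gdist_le) (simp add: walk_of_len_Suc_iff)
  moreover have "gdist E u v \<noteq> 0"
    using e gdist_eq_0_iff connected_graph_edge_in connected_graph_irrefl by blast
  ultimately show ?thesis by simp
qed

lemma exists_neighbour_closer:
  assumes "q \<in> V" "v \<in> V" "q \<noteq> v"
  shows "\<exists>w. E q w \<and> Suc (gdist E w v) = gdist E q v"
proof -
  obtain k where k: "gdist E q v = Suc k"
    using assms gdist_eq_0_iff[of q v] not0_implies_Suc by blast
  then obtain w where w: "E q w" "walk_of_len E k w v"
    using walk_of_len_gdist[OF assms(1,2)] by (auto simp: walk_of_len_Suc_iff)
  have "gdist E q v \<le> gdist E q w + gdist E w v"
    using assms w(1) connected_graph_edge_in by (intro gdist_triangle) auto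
  then have "Suc (gdist E w v) = gdist E q v"
    using gdist_le[OF w(2)] gdist_edge[OF w(1)] k by linarith
  with w(1) show ?thesis by blast
qed

section \<open>Compatible sets\<close>

lemma Ncomp_subset_Ncomp_neighbour:
  assumes q: "q \<in> V" and v: "v \<in> V" and "q \<noteq> v"
  shows "\<exists>w. E q w \<and> Ncomp V E q v \<subseteq> Ncomp V E q w"
proof -
  obtain w where w: "E q w" "Suc (gdist E w v) = gdist E q v"
    using exists_neighbour_closer[OF assms] by blast
  have "u \<in> Ncomp V E q w" if "u \<in> Ncomp V E q v" for u
  proof -
    have u: "u \<in> V" "gdist E q v + gdist E v u = gdist E q u"
      using that \<open>q \<noteq> v\<close> by (auto simp: Ncomp_def compatible_def)
    have "w \<in> V" "q \<noteq> w"
      using w(1) connected_graph_edge_in connected_graph_irrefl by auto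
    then have "gdist E q w + gdist E w u = gdist E q u"
      using gdist_triangle[of w v u] gdist_triangle[of q w u] u v q w gdist_edge[OF w(1)]
      by linarith
    with u(1) \<open>q \<noteq> w\<close> show ?thesis by (simp add: Ncomp_def compatible_def)
  qed
  with w(1) show ?thesis by blast
qed

lemma query_notin_Ncomp: "q \<in> V \<Longrightarrow> v \<in> V \<Longrightarrow> q \<noteq> v \<Longrightarrow> q \<notin> Ncomp V E q v"
  using gdist_eq_0_iff by (auto simp: Ncomp_def compatible_def)

lemma correct_reply_edge_compatible:
  assumes "t \<in> V" "q \<noteq> t" "correct_reply E t q v"
  shows "E q v" "t \<in> Ncomp V E q v"
proof -
  show e: "E q v"
    using assms by (simp add: correct_reply_def)
  then show "t \<in> Ncomp V E q v"
    using assms gdist_edge connected_graph_irrefl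
    by (auto simp: correct_reply_def Ncomp_def compatible_def)
qed

lemma target_in_Ncomp_correct_reply:
  "t \<in> V \<Longrightarrow> correct_reply E t q v \<Longrightarrow> t \<in> Ncomp V E q v"
  using correct_reply_edge_compatible[of t q v]
  by (cases "q = t") (auto simp: correct_reply_def Ncomp_def compatible_def)

lemma delta_close_wsum_Ncomp_le:
  assumes q: "delta_close V E w \<delta> q" and w: "\<And>u. u \<in> V \<Longrightarrow> 0 \<le> w u"
    and v: "v \<in> V" "v \<noteq> q"
  shows "wsum w (Ncomp V E q v) \<le> (1/2 + \<delta>) * wsum w V"
proof -
  obtain u where u: "E q u" "Ncomp V E q v \<subseteq> Ncomp V E q u"
    using Ncomp_subset_Ncomp_neighbour[of q v] q v by (auto simp: delta_close_def)
  have "wsum w (Ncomp V E q v) \<le> wsum w (Ncomp V E q u)"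
    unfolding wsum_def using u(2) w connected_graph_finite
    by (intro sum_mono2) (auto simp: Ncomp_def)
  also have "\<dots> \<le> (1/2 + \<delta>) * wsum w V"
    using q u(1) by (simp add: delta_close_def)
  finally show ?thesis .
qed

lemma delta_close_wsum_Diff_Ncomp_ge:
  assumes q: "delta_close V E w \<delta> q" and w: "\<And>u. u \<in> V \<Longrightarrow> 0 \<le> w u"
    and v: "v \<in> V" "v \<noteq> q"
  shows "(1/2 - \<delta>) * wsum w V \<le> wsum w (V - Ncomp V E q v)"
proof -
  have "wsum w V = wsum w (Ncomp V E q v) + wsum w (V - Ncomp V E q v)"
    unfolding wsum_def using connected_graph_finite sum.subset_diff[of "Ncomp V E q v" V w]
    by (auto simp: Ncomp_def)
  with delta_close_wsum_Ncomp_le[OF assms] show ?thesis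
    by (simp add: algebra_simps)
qed

end

lemma Ncomp_self: "q \<in> V \<Longrightarrow> Ncomp V E q q = {q}"
  unfolding Ncomp_def compatible_def by auto

lemma correct_reply_self: "correct_reply E t t v \<longleftrightarrow> v = t"
  by (auto simp: correct_reply_def)

lemma mass_bounds_arith:
  fixes \<eta> W rest lost kept :: real
  assumes \<eta>: "0 < \<eta>" "\<eta> \<le> 1/2" and rest: "0 \<le> rest" "rest \<le> W"
    and lost: "(1/2 - \<eta>/4) * W \<le> lost" and kept: "kept \<le> (1/2 + \<eta>/4) * W \<or> kept \<le> lost"
  shows "rest \<le> 4 * lost \<and> \<eta> * rest \<le> (1 + 4 * \<eta>) * lost - kept"
proof -
  have "1/4 * W \<le> (1/2 - \<eta>/4) * W"
    using rest \<eta> by (intro mult_right_mono) auto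
  with lost rest have "rest \<le> 4 * lost" by linarith
  moreover have "\<eta> * rest \<le> (1 + 4 * \<eta>) * lost - kept"
    using kept
  proof
    assume "kept \<le> (1/2 + \<eta>/4) * W"
    moreover have "(1 + 4 * \<eta>) * ((1/2 - \<eta>/4) * W) \<le> (1 + 4 * \<eta>) * lost"
      using lost \<eta> by (intro mult_left_mono) auto
    moreover have "0 \<le> \<eta> * (1/2 - \<eta>) * W" "\<eta> * rest \<le> \<eta> * W"
      using rest \<eta> by auto
    moreover have "(1 + 4 * \<eta>) * ((1/2 - \<eta>/4) * W)
        = (1/2 + \<eta>/4) * W + \<eta> * W + \<eta> * (1/2 - \<eta>) * W"
      by (simp add: field_simps)
    ultimately show ?thesis by linarith
  next
    assume "kept \<le> lost"
    moreover have "\<eta> * rest \<le> \<eta> * (4 * lost)"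
      using \<open>rest \<le> 4 * lost\<close> \<eta> by simp
    ultimately show ?thesis by (simp add: algebra_simps)
  qed
  ultimately show ?thesis ..
qed

lemma reply_mass_bounds:
  assumes G: "connected_graph V E" and t: "t \<in> V"
    and q: "delta_close V E w (\<eta>/4) q" and w: "\<And>u. u \<in> V \<Longrightarrow> 0 \<le> w u"
    and \<eta>: "0 < \<eta>" "\<eta> \<le> 1/2"
    and vc: "correct_reply E t q vc" and ve: "ve \<in> V"
  defines "rest \<equiv> sum w (V - {t})"
    and "lost \<equiv> sum w (V - Ncomp V E q vc)"
    and "kept \<equiv> sum w (Ncomp V E q ve - {t})"
  shows "rest \<le> 4 * lost \<and> \<eta> * rest \<le> (1 + 4 * \<eta>) * lost - kept"
proof -
  have fin: "finite V" and qV: "q \<in> V"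
    using connected_graph_finite[OF G] q by (auto simp: delta_close_def)
  have "0 \<le> rest" unfolding rest_def using w by (auto intro: sum_nonneg)
  have kept_le: "kept \<le> rest"
    unfolding kept_def rest_def using fin w by (intro sum_mono2) (auto simp: Ncomp_def)
  show ?thesis
  proof (cases "q = t")
    case True
    then have "lost = rest"
      using vc Ncomp_self[OF t] by (simp add: correct_reply_self lost_def rest_def)
    moreover have "0 \<le> \<eta> * rest" using \<open>0 \<le> rest\<close> \<eta> by simp
    ultimately show ?thesis using kept_le \<open>0 \<le> rest\<close> by (simp add: algebra_simps)
  next
    case False
    have "E q vc"
      using correct_reply_edge_compatible[OF G t False vc] by auto
    then have vc': "vc \<in> V" "vc \<noteq> q"
      using connected_graph_irrefl[OF G] connected_graph_edge_in[OF G] by auto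
    have "kept \<le> (1/2 + \<eta>/4) * sum w V \<or> kept \<le> lost"
    proof (cases "ve = q")
      case True
      then have "kept = w q"
        using Ncomp_self[OF qV] False by (simp add: kept_def)
      also have "\<dots> \<le> lost"
        unfolding lost_def using query_notin_Ncomp[OF G qV vc'(1)] vc'(2) qV fin w
        by (intro member_le_sum) auto
      finally show ?thesis ..
    next
      case False
      have "kept \<le> sum w (Ncomp V E q ve)"
        unfolding kept_def using fin w by (intro sum_mono2) (auto simp: Ncomp_def)
      also have "\<dots> \<le> (1/2 + \<eta>/4) * sum w V"
        using delta_close_wsum_Ncomp_le[OF G q w ve False] by (simp add: wsum_def)
      finally show ?thesis ..
    qed
    moreover have "rest \<le> sum w V"
      unfolding rest_def using fin w t by (intro sum_mono2) auto
    ultimately show ?thesis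
      using mass_bounds_arith[OF \<eta> \<open>0 \<le> rest\<close>] delta_close_wsum_Diff_Ncomp_ge[OF G q w vc']
      by (simp add: wsum_def lost_def)
  qed
qed

section \<open>Multiplicative weights and the potential\<close>

definition penalize :: "real \<Rightarrow> 'a set \<Rightarrow> ('a \<Rightarrow> real) \<Rightarrow> 'a \<Rightarrow> real" where
  "penalize a C w u = (if u \<in> C then w u else a * w u)"

definition potential :: "'a set \<Rightarrow> ('a \<Rightarrow> real) \<Rightarrow> 'a \<Rightarrow> real" where
  "potential V w t = sum w (V - {t}) / w t"

lemma weight_pos: "finite V \<Longrightarrow> V \<noteq> {} \<Longrightarrow> 0 < \<Gamma> \<Longrightarrow> 0 < weight V E \<Gamma> h u"
  by (simp add: weight_def card_gt_0_iff)

lemma potential_weight_nonneg: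
  "finite V \<Longrightarrow> V \<noteq> {} \<Longrightarrow> 0 < \<Gamma> \<Longrightarrow> 0 \<le> potential V (weight V E \<Gamma> h) t"
  using weight_pos[of V \<Gamma> E h] unfolding potential_def
  by (intro divide_nonneg_nonneg sum_nonneg) (auto intro: less_imp_le)

lemma weight_snoc:
  "\<Gamma> \<noteq> 0 \<Longrightarrow>
   weight V E \<Gamma> (h @ [(q, v)]) = penalize (1/\<Gamma>) {u. compatible E u q v} (weight V E \<Gamma> h)"
  by (auto simp: fun_eq_iff weight_def penalize_def cnt_def power_add field_simps)

lemma sum_penalize:
  "finite A \<Longrightarrow> sum (penalize a C w) A = sum w A - (1 - a) * sum w (A - C)"
proof -
  assume A: "finite A"
  have "sum (penalize a C w) A = sum w (A \<inter> C) + a * sum w (A - C)"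
    using A by (simp add: penalize_def sum.If_cases Diff_eq Int_def sum_distrib_left)
  moreover have "sum w A = sum w (A \<inter> C) + sum w (A - C)"
    using A by (metis sum.Int_Diff)
  ultimately show ?thesis by (simp add: algebra_simps)
qed

lemma potential_penalize_mem:
  assumes "finite V" "t \<in> C"
  shows "potential V (penalize a C w) t = potential V w t - (1 - a) * sum w (V - C) / w t"
proof -
  have "V - {t} - C = V - C" using assms(2) by blast
  then show ?thesis
    using assms by (simp add: potential_def sum_penalize penalize_def[where u = t] diff_divide_distrib)
qed

lemma potential_penalize_le:
  assumes V: "finite V" "t \<in> V" and w: "\<And>u. u \<in> V \<Longrightarrow> 0 < w u" and a: "0 < a" "a \<le> 1"
  shows "potential V (penalize a C w) t
           \<le> potential V w t + (1 - a) / a * sum w (V \<inter> C - {t}) / w t"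
proof (cases "t \<in> C")
  case True
  have "0 \<le> (1 - a) * sum w (V - C) / w t" "0 \<le> (1 - a) / a * sum w (V \<inter> C - {t}) / w t"
    using V w a by (auto intro!: sum_nonneg divide_nonneg_nonneg mult_nonneg_nonneg simp: less_imp_le)
  then show ?thesis
    using potential_penalize_mem[OF V(1) True, of a w] by linarith
next
  case False
  define S where "S = sum w (V \<inter> C - {t})"
  define R where "R = sum w (V - {t} - C)"
  have "(V - {t}) \<inter> C = V \<inter> C - {t}" by blast
  then have split: "sum w (V - {t}) = S + R"
    using sum.Int_Diff[of "V - {t}" w C] V(1) by (simp add: S_def R_def)
  have "potential V (penalize a C w) t = (S + a * R) / (a * w t)"
    using V(1) False by (simp add: potential_def sum_penalize penalize_def[where u = t] split
        R_def algebra_simps)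
  also have "\<dots> = potential V w t + (1 - a) / a * S / w t"
    using a w[OF V(2)] by (simp add: potential_def split field_simps)
  finally show ?thesis by (simp add: S_def)
qed

lemma one_minus_two_sq_nonneg: "0 \<le> \<eta> \<Longrightarrow> \<eta> \<le> 1/2 \<Longrightarrow> 0 \<le> 1 - 2 * (\<eta>::real)^2"
  using mult_mono[of \<eta> "1/2" \<eta> "1/2"] by (simp add: power2_eq_square)

lemma convex_comb_le_of_le:
  fixes x y K p r :: real
  assumes "0 \<le> r" "r \<le> p" "x \<le> K" "(1 - p) * x + p * y \<le> K"
  shows "(1 - r) * x + r * y \<le> K"
proof (cases "y \<le> x")
  case True
  then have "r * y \<le> r * x" using assms(1) by (rule mult_left_mono)
  with assms(3) show ?thesis by (simp add: algebra_simps)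
next
  case False
  then have "r * (y - x) \<le> p * (y - x)" using assms(2) by (intro mult_right_mono) auto
  with assms(4) show ?thesis by (simp add: algebra_simps)
qed

lemma potential_drop_arith:
  fixes \<eta> rest lost kept wt Pc Pe r :: real
  assumes \<eta>: "0 < \<eta>" "\<eta> < 1/4" and wt: "0 < wt" and rest: "0 \<le> rest"
    and lost: "rest \<le> 4 * lost" and kept: "\<eta> * rest \<le> (1 + 4 * \<eta>) * lost - kept"
    and Pc: "Pc = rest / wt - 4 * \<eta> * lost / wt"
    and Pe: "Pe \<le> rest / wt + 4 * \<eta> / (1 - 4 * \<eta>) * kept / wt"
    and r: "0 \<le> r" "r \<le> 1/2 - 2 * \<eta>"
  shows "(1 - r) * Pc + r * Pe \<le> (1 - 2 * \<eta>^2) * (rest / wt)"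
proof (rule convex_comb_le_of_le[OF r])
  have "2 * \<eta>^2 * rest \<le> \<eta> * rest"
    using \<eta> rest by (simp add: power2_eq_square mult_right_mono)
  moreover have "\<eta> * rest \<le> 4 * \<eta> * lost"
    using \<eta> lost by simp
  ultimately have "rest - 4 * \<eta> * lost \<le> (1 - 2 * \<eta>^2) * rest"
    by (simp add: algebra_simps)
  then show "Pc \<le> (1 - 2 * \<eta>^2) * (rest / wt)"
    using wt by (simp add: Pc field_simps)
  have "2 * \<eta>^2 * rest \<le> 2 * \<eta> * ((1 + 4 * \<eta>) * lost - kept)"
    using \<eta> kept by (simp add: power2_eq_square)
  then have "(rest - 2 * \<eta> * ((1 + 4 * \<eta>) * lost - kept)) / wt \<le> (1 - 2 * \<eta>^2) * rest / wt"
    using wt by (intro divide_right_mono) (auto simp: algebra_simps)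
  moreover have "(1 - (1/2 - 2 * \<eta>)) * Pc
           + (1/2 - 2 * \<eta>) * (rest / wt + 4 * \<eta> / (1 - 4 * \<eta>) * kept / wt)
         = (rest - 2 * \<eta> * ((1 + 4 * \<eta>) * lost - kept)) / wt"
    using \<eta> wt by (simp add: Pc field_simps)
  moreover have "(1/2 - 2 * \<eta>) * Pe \<le> (1/2 - 2 * \<eta>) * (rest / wt + 4 * \<eta> / (1 - 4 * \<eta>) * kept / wt)"
    using Pe \<eta> by (intro mult_left_mono) auto
  ultimately show "(1 - (1/2 - 2 * \<eta>)) * Pc + (1/2 - 2 * \<eta>) * Pe \<le> (1 - 2 * \<eta>^2) * (rest / wt)"
    by simp
qed

lemma expected_potential_step:
  fixes \<eta> :: real
  defines "\<Gamma> \<equiv> 1 / (1 - 4 * \<eta>)"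
  assumes G: "connected_graph V E" and t: "t \<in> V" and \<eta>: "0 < \<eta>" "\<eta> < 1/4"
    and q: "delta_close V E (weight V E \<Gamma> h) (\<eta>/4) q"
    and vc: "correct_reply E t q vc" and ve: "ve \<in> V" and r: "0 \<le> r" "r \<le> 1/2 - 2 * \<eta>"
  shows "(1 - r) * potential V (weight V E \<Gamma> (h @ [(q, vc)])) t
           + r * potential V (weight V E \<Gamma> (h @ [(q, ve)])) t
         \<le> (1 - 2 * \<eta>^2) * potential V (weight V E \<Gamma> h) t"
proof -
  define w where "w = weight V E \<Gamma> h"
  define rest where "rest = sum w (V - {t})"
  define lost where "lost = sum w (V - Ncomp V E q vc)"
  define kept where "kept = sum w (Ncomp V E q ve - {t})"
  have fin: "finite V" using G connected_graph_finite by blast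
  have w: "0 < w u" for u
    unfolding w_def \<Gamma>_def using \<eta> fin t by (intro weight_pos) auto
  have upd: "weight V E \<Gamma> (h @ [(q, v)]) = penalize (1 - 4 * \<eta>) {u. compatible E u q v} w" for v
    using weight_snoc[of \<Gamma>] \<eta> by (simp add: w_def \<Gamma>_def)
  define Pc where "Pc = potential V (weight V E \<Gamma> (h @ [(q, vc)])) t"
  define Pe where "Pe = potential V (weight V E \<Gamma> (h @ [(q, ve)])) t"
  have Pc: "Pc = rest / w t - 4 * \<eta> * lost / w t"
  proof -
    have "t \<in> {u. compatible E u q vc}" "V - {u. compatible E u q vc} = V - Ncomp V E q vc"
      using target_in_Ncomp_correct_reply[OF G t vc] by (auto simp: Ncomp_def)
    then show ?thesis
      using fin by (simp add: Pc_def upd potential_penalize_mem lost_def rest_def potential_def[of V w t])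
  qed
  have Pe: "Pe \<le> rest / w t + 4 * \<eta> / (1 - 4 * \<eta>) * kept / w t"
  proof -
    have "V \<inter> {u. compatible E u q ve} = Ncomp V E q ve"
      by (auto simp: Ncomp_def)
    then show ?thesis
      using potential_penalize_le[OF fin t, of w "1 - 4 * \<eta>" "{u. compatible E u q ve}"] w \<eta>
      by (simp add: Pe_def upd kept_def rest_def potential_def[of V w t])
  qed
  have "0 \<le> rest"
    unfolding rest_def using w by (simp add: sum_nonneg less_imp_le)
  moreover have "rest \<le> 4 * lost" "\<eta> * rest \<le> (1 + 4 * \<eta>) * lost - kept"
    using reply_mass_bounds[OF G t _ _ _ _ vc ve, of w \<eta>] q w \<eta>
    by (auto simp: w_def rest_def lost_def kept_def less_imp_le)
  ultimately have "(1 - r) * Pc + r * Pe \<le> (1 - 2 * \<eta>^2) * (rest / w t)"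
    using potential_drop_arith[OF \<eta> w _ _ _ Pc Pe r] by blast
  then show ?thesis
    by (simp add: Pc_def Pe_def potential_def[of V w t] w_def[symmetric] rest_def)
qed

section \<open>The randomized execution\<close>

lemma run_cong: "(\<And>i. i < t \<Longrightarrow> c i = c' i) \<Longrightarrow> run Q cor err c t = run Q cor err c' t"
proof (induction t)
  case (Suc t)
  then have "run Q cor err c t = run Q cor err c' t" "map c [0..<t] = map c' [0..<t]" "c t = c' t"
    by simp_all
  then show ?case by (simp only: run.simps Let_def)
qed simp

lemma run_Suc_fun_upd:
  "run Q cor err (c(t := y)) (Suc t) =
     (let h = run Q cor err c t; q = Q h; bs = map c [0..<t]
      in h @ [(q, if y then err bs q else cor bs q)])"
proof -
  have "run Q cor err (c(t := y)) t = run Q cor err c t" by (rule run_cong) simp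
  then show ?thesis by (simp add: Let_def)
qed

lemma nn_integral_run_le:
  fixes \<Phi> :: "('a \<times> 'a) list \<Rightarrow> real" and pr :: "nat \<Rightarrow> real"
  assumes nonneg: "\<And>h. 0 \<le> \<Phi> h" and pr: "\<And>i. 0 \<le> pr i \<and> pr i \<le> 1" and \<kappa>: "0 \<le> \<kappa>"
    and step: "\<And>i h bs. (1 - pr i) * \<Phi> (h @ [(Q h, cor bs (Q h))]) + pr i * \<Phi> (h @ [(Q h, err bs (Q h))])
                  \<le> \<kappa> * \<Phi> h"
  shows "(\<integral>\<^sup>+c. ennreal (\<Phi> (run Q cor err c t)) \<partial>Pi_pmf {..<t} False (\<lambda>i. bernoulli_pmf (pr i)))
          \<le> ennreal (\<kappa>^t * \<Phi> [])"
proof (induction t)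
  case 0
  then show ?case by (simp add: measure_pmf.emeasure_space_1)
next
  case (Suc t)
  let ?P = "\<lambda>i. bernoulli_pmf (pr i)"
  let ?R = "\<lambda>c. run Q cor err c t"
  have split: "Pi_pmf {..<Suc t} False ?P =
      bind_pmf (Pi_pmf {..<t} False ?P) (\<lambda>f. bind_pmf (?P t) (\<lambda>y. return_pmf (f(t := y))))"
    by (simp add: lessThan_Suc Pi_pmf_insert' bind_commute_pmf[of "?P t"])
  have last_step: "(\<integral>\<^sup>+y. ennreal (\<Phi> (run Q cor err (f(t := y)) (Suc t))) \<partial>?P t)
     = ennreal ((1 - pr t) * \<Phi> (?R f @ [(Q (?R f), cor (map f [0..<t]) (Q (?R f)))])
        + pr t * \<Phi> (?R f @ [(Q (?R f), err (map f [0..<t]) (Q (?R f)))]))" for f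
    unfolding run_Suc_fun_upd using pr[of t] nonneg
    by (simp add: Let_def ennreal_mult'' add.commute mult.commute)
  have "(\<integral>\<^sup>+c. ennreal (\<Phi> (run Q cor err c (Suc t))) \<partial>Pi_pmf {..<Suc t} False ?P)
      = (\<integral>\<^sup>+f. (\<integral>\<^sup>+y. ennreal (\<Phi> (run Q cor err (f(t := y)) (Suc t))) \<partial>?P t) \<partial>Pi_pmf {..<t} False ?P)"
    unfolding split by simp
  also have "\<dots> \<le> (\<integral>\<^sup>+f. ennreal (\<kappa> * \<Phi> (?R f)) \<partial>Pi_pmf {..<t} False ?P)"
    unfolding last_step by (intro nn_integral_mono ennreal_leI step)
  also have "\<dots> = ennreal \<kappa> * (\<integral>\<^sup>+f. ennreal (\<Phi> (?R f)) \<partial>Pi_pmf {..<t} False ?P)"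
    using \<kappa> by (simp add: ennreal_mult nonneg nn_integral_cmult)
  also have "\<dots> \<le> ennreal \<kappa> * ennreal (\<kappa>^t * \<Phi> [])"
    by (intro mult_left_mono Suc.IH) auto
  also have "\<dots> = ennreal (\<kappa>^Suc t * \<Phi> [])"
    using \<kappa> nonneg by (simp add: ennreal_mult[symmetric] mult.assoc)
  finally show ?case .
qed

lemma measure_pmf_prob_ge_1_le:
  fixes M :: "'b pmf" and f :: "'b \<Rightarrow> real"
  assumes "\<And>x. 0 \<le> f x" and "(\<integral>\<^sup>+x. ennreal (f x) \<partial>M) \<le> ennreal B" and "0 \<le> B"
  shows "measure_pmf.prob M {x. 1 \<le> f x} \<le> B"
proof -
  have "emeasure M {x. 1 \<le> f x} = (\<integral>\<^sup>+x. indicator {x. 1 \<le> f x} x \<partial>M)"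
    by simp
  also have "\<dots> \<le> (\<integral>\<^sup>+x. ennreal (f x) \<partial>M)"
    by (intro nn_integral_mono) (auto split: split_indicator)
  also have "\<dots> \<le> ennreal B"
    by (rule assms(2))
  finally show ?thesis
    using assms(3) by (simp add: measure_pmf.emeasure_eq_measure)
qed

lemma geometric_decay_le_inverse_cube:
  fixes \<eta> :: real and n \<tau> :: nat
  assumes \<eta>: "0 < \<eta>" "\<eta> \<le> 1/2" and n: "1 \<le> n"
    and \<tau>: "10 * log 2 (real n) / \<eta>^2 \<le> real \<tau>"
  shows "(1 - 2 * \<eta>^2)^\<tau> * (real n - 1) \<le> 1 / real n ^ 3"
proof (cases "n = 1")
  case False
  then have n2: "2 \<le> real n" using n by simp
  have "0 \<le> 1 - 2 * \<eta>^2"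
    using \<eta> by (intro one_minus_two_sq_nonneg) auto
  then have "(1 - 2 * \<eta>^2)^\<tau> \<le> exp (- (2 * \<eta>^2))^\<tau>"
    using exp_ge_add_one_self[of "- (2 * \<eta>^2)"] by (intro power_mono) auto
  also have "\<dots> = exp (- (2 * \<eta>^2 * real \<tau>))"
    by (simp add: exp_of_nat_mult[symmetric] mult.commute)
  also have "\<dots> \<le> exp (- (4 * ln (real n)))"
  proof -
    have "20 * log 2 (real n) \<le> 2 * \<eta>^2 * real \<tau>"
      using mult_left_mono[OF \<tau>, of "2 * \<eta>^2"] \<eta> by simp
    moreover have "ln (real n) \<le> log 2 (real n)"
      using n2 ln_2_less_1 by (simp add: log_def le_divide_eq mult_left_le)
    moreover have "0 \<le> ln (real n)" using n2 by simp
    ultimately show ?thesis by simp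
  qed
  also have "\<dots> = 1 / real n ^ 4"
    using n2 by (simp add: exp_minus exp_of_nat_mult[of 4, simplified] exp_ln inverse_eq_divide)
  finally have "(1 - 2 * \<eta>^2)^\<tau> * (real n - 1) \<le> 1 / real n ^ 4 * real n"
    using n2 \<open>0 \<le> 1 - 2 * \<eta>^2\<close> by (intro mult_mono) auto
  then show ?thesis
    using n2 by (simp add: power_Suc2[symmetric] numeral_eq_Suc)
qed simp

lemma least_penalized_eq_target:
  assumes "finite V" "t \<in> V" "1 \<le> \<Gamma>" "u \<in> V" "cnt E h u \<le> cnt E h t"
    and "potential V (weight V E \<Gamma> h) t < 1"
  shows "u = t"
proof (rule ccontr)
  assume "u \<noteq> t"
  have "weight V E \<Gamma> h t \<le> weight V E \<Gamma> h u"
    unfolding weight_def using assms power_increasing[of "cnt E h u" "cnt E h t" \<Gamma>]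
    by (intro divide_left_mono) auto
  also have "\<dots> \<le> sum (weight V E \<Gamma> h) (V - {t})"
    using assms \<open>u \<noteq> t\<close> weight_pos[of V \<Gamma>]
    by (intro member_le_sum) (auto intro: less_imp_le)
  moreover have "0 < weight V E \<Gamma> h t"
    using assms by (intro weight_pos) auto
  ultimately show False
    using assms(6) by (simp add: potential_def divide_less_eq)
qed

lemma nn_integral_potential_run_le:
  fixes \<eta> :: real
  defines "\<Gamma> \<equiv> 1 / (1 - 4 * \<eta>)"
  assumes G: "connected_graph V E" and t: "t \<in> V" and \<eta>: "0 < \<eta>" "\<eta> < 1/4"
    and query: "\<And>h. delta_close V E (weight V E \<Gamma> h) (\<eta>/4) (Q h)"
    and cor: "\<And>bs q. q \<in> V \<Longrightarrow> correct_reply E t q (cor bs q)"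
    and err: "\<And>bs q. q \<in> V \<Longrightarrow> err bs q \<in> V"
    and pr: "\<And>i. 0 \<le> pr i \<and> pr i \<le> 1/2 - 2 * \<eta>"
  shows "(\<integral>\<^sup>+c. ennreal (potential V (weight V E \<Gamma> (run Q cor err c \<tau>)) t)
            \<partial>Pi_pmf {..<\<tau>} False (\<lambda>i. bernoulli_pmf (pr i)))
         \<le> ennreal ((1 - 2 * \<eta>^2)^\<tau> * (real (card V) - 1))"
proof -
  have fin: "finite V" using connected_graph_finite[OF G] .
  have "potential V (weight V E \<Gamma> []) t = real (card V) - 1"
    using fin t by (auto simp: potential_def weight_def cnt_def Suc_le_eq card_gt_0_iff of_nat_diff)
  moreover have "(\<integral>\<^sup>+c. ennreal (potential V (weight V E \<Gamma> (run Q cor err c \<tau>)) t)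
            \<partial>Pi_pmf {..<\<tau>} False (\<lambda>i. bernoulli_pmf (pr i)))
         \<le> ennreal ((1 - 2 * \<eta>^2)^\<tau> * potential V (weight V E \<Gamma> []) t)"
  proof (rule nn_integral_run_le)
    show "0 \<le> potential V (weight V E \<Gamma> h) t" for h
      using fin t \<eta> by (intro potential_weight_nonneg) (auto simp: \<Gamma>_def)
    show "0 \<le> pr i \<and> pr i \<le> 1" for i
      using pr[of i] \<eta> by auto
    show "0 \<le> 1 - 2 * \<eta>^2"
      using \<eta> by (intro one_minus_two_sq_nonneg) auto
    show "(1 - pr i) * potential V (weight V E \<Gamma> (h @ [(Q h, cor bs (Q h))])) t
        + pr i * potential V (weight V E \<Gamma> (h @ [(Q h, err bs (Q h))])) t
        \<le> (1 - 2 * \<eta>^2) * potential V (weight V E \<Gamma> h) t" for i h bs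
    proof -
      have "Q h \<in> V" using query[of h] by (simp add: delta_close_def)
      then show ?thesis
        using query[of h] pr[of i] unfolding \<Gamma>_def
        by (intro expected_potential_step[OF G t \<eta> _ cor err]) auto
    qed
  qed
  ultimately show ?thesis by simp
qed

lemma prob_least_penalized_eq_target_ge:
  fixes M :: "'b pmf" and H :: "'b \<Rightarrow> ('a \<times> 'a) list"
  assumes "finite V" "t \<in> V" "1 \<le> \<Gamma>"
    and out: "\<And>h. out h \<in> V \<and> (\<forall>u\<in>V. cnt E h (out h) \<le> cnt E h u)"
  shows "1 - measure_pmf.prob M {x. 1 \<le> potential V (weight V E \<Gamma> (H x)) t}
           \<le> measure_pmf.prob M {x. out (H x) = t}"
proof -
  have "1 - measure_pmf.prob M {x. 1 \<le> potential V (weight V E \<Gamma> (H x)) t}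
      = measure_pmf.prob M (- {x. 1 \<le> potential V (weight V E \<Gamma> (H x)) t})"
    using measure_pmf.prob_compl[of "{x. 1 \<le> potential V (weight V E \<Gamma> (H x)) t}" M]
    by (simp add: Compl_eq_Diff_UNIV)
  also have "\<dots> \<le> measure_pmf.prob M {x. out (H x) = t}"
    using assms out[of "H _"]
    by (intro measure_pmf.finite_measure_mono subsetI)
      (auto simp: not_le intro!: least_penalized_eq_target)
  finally show ?thesis .
qed

theorem lemma11:
  fixes V :: "'a set" and E :: "'a \<Rightarrow> 'a \<Rightarrow> bool"
    and \<epsilon> :: real and vstar :: 'a
    and Q :: "('a \<times> 'a) list \<Rightarrow> 'a"
    and cor err :: "bool list \<Rightarrow> 'a \<Rightarrow> 'a"
    and out :: "('a \<times> 'a) list \<Rightarrow> 'a"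
    and pr :: "nat \<Rightarrow> real"
  defines "n \<equiv> card V"
    and "p \<equiv> 1/2 - \<epsilon>"
    and "\<eta> \<equiv> \<epsilon> / 2"
  defines "\<delta> \<equiv> \<eta> / 4"
    and "\<Gamma> \<equiv> 1 / (1 - 4 * \<eta>)"
    and "\<tau> \<equiv> nat \<lceil>10 * log 2 (real n) / \<eta>^2\<rceil>"
  assumes graph: "connected_graph V E"
    and eps: "0 < \<epsilon>" "\<epsilon> \<le> 1/2"
    and eta_small: "\<eta> < 1/8"
    and target: "vstar \<in> V"
    and query: "\<And>h. delta_close V E (weight V E \<Gamma> h) \<delta> (Q h)"
    and cor: "\<And>bs q. q \<in> V \<Longrightarrow> correct_reply E vstar q (cor bs q)"
    and err: "\<And>bs q. q \<in> V \<Longrightarrow> err bs q \<in> V"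
    and outsel: "\<And>h. out h \<in> V \<and> (\<forall>u\<in>V. cnt E h (out h) \<le> cnt E h u)"
    and noise: "\<And>t. 0 \<le> pr t \<and> pr t \<le> p"
  shows "measure_pmf.prob (Pi_pmf {..<\<tau>} False (\<lambda>t. bernoulli_pmf (pr t)))
           {c. out (run Q cor err c \<tau>) = vstar} \<ge> 1 - 1 / real n ^ 3"
proof -
  let ?M = "Pi_pmf {..<\<tau>} False (\<lambda>t. bernoulli_pmf (pr t))"
  let ?bad = "{c. 1 \<le> potential V (weight V E \<Gamma> (run Q cor err c \<tau>)) vstar}"
  have fin: "finite V" using connected_graph_finite[OF graph] .
  have n: "1 \<le> n" unfolding n_def using fin target by (auto simp: Suc_le_eq card_gt_0_iff)
  have \<eta>: "0 < \<eta>" "\<eta> < 1/4" using eps eta_small by (auto simp: \<eta>_def)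
  have "p = 1/2 - 2 * \<eta>" by (simp add: p_def \<eta>_def)
  then have "(\<integral>\<^sup>+c. ennreal (potential V (weight V E \<Gamma> (run Q cor err c \<tau>)) vstar) \<partial>?M)
             \<le> ennreal ((1 - 2 * \<eta>^2)^\<tau> * (real n - 1))"
    using nn_integral_potential_run_le[OF graph target \<eta>, of Q cor err pr] query cor err noise
    by (simp add: \<Gamma>_def \<delta>_def n_def)
  then have "measure_pmf.prob ?M ?bad \<le> (1 - 2 * \<eta>^2)^\<tau> * (real n - 1)"
    using fin target \<eta> n one_minus_two_sq_nonneg[of \<eta>]
    by (intro measure_pmf_prob_ge_1_le) (auto intro: potential_weight_nonneg simp: \<Gamma>_def)
  also have "\<dots> \<le> 1 / real n ^ 3"
    using \<eta> n by (intro geometric_decay_le_inverse_cube) (auto simp: \<tau>_def)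
  finally have "measure_pmf.prob ?M ?bad \<le> 1 / real n ^ 3" .
  moreover have "1 - measure_pmf.prob ?M ?bad \<le> measure_pmf.prob ?M {c. out (run Q cor err c \<tau>) = vstar}"
    using \<eta> by (intro prob_least_penalized_eq_target_ge[OF fin target _ outsel]) (simp add: \<Gamma>_def)
  ultimately show ?thesis by linarith
qed

end
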